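(* (Cut elimination and subformula property.) Every sequent derivable in D.BL (resp. D.CBL) has a derivation in D.BL (resp. D.CBL) that does not use the Cut rule, and D.BL and D.CBL have the subformula property: every formula occurring in a cut-free derivation is a subformula of a formula occurring in its end-sequent.
   Context: Calculus D.BL. Two types $1,2$; type-$i$ atoms $p_i,q_i,\dots$. Type-1 formulas: $A_1::=p_1\mid 1_1\mid 0_1\mid \mathrm{p}A_2\mid A_1\sqcap_1A_1\mid A_1\sqcup_1A_1$; type-2 formulas: $A_2::=p_2\mid 1_2\mid 0_2\mid \mathrm{n}A_1\mid A_2\sqcap_2A_2\mid A_2\sqcup_2A_2$ (subformulas are taken across types, e.g. $A_2$ is a subformula of $\mathrm{p}A_2$). Type-1 structures: $X_1::=A_1\mid \hat1_1\mid\check0_1\mid \mathrm{P}X_2\mid X_1\hat\sqcap_1X_1\mid X_1\check\sqcup_1X_1\mid X_1\check\sqsupset_1X_1\mid X_1\hat\sqsubset_1X_1$; type-2 structures analogously with index 2 and $\mathrm{N}X_1$ instead of $\mathrm{P}X_2$. Sequents $X_i\vdash Y_i$ have both sides of the same type. Rules (for $i\in\{1,2\}$; "$\Leftrightarrow$" = both directions): Display: $X\hat\sqcap_iY\vdash Z\Leftrightarrow X\vdash Y\check\sqsupset_iZ$; $X\vdash Y\check\sqcup_iZ\Leftrightarrow X\hat\sqsubset_iY\vdash Z$; $\mathrm{P}X_2\vdash Y_1\Leftrightarrow X_2\vdash \mathrm{N}Y_1$; $\mathrm{N}X_1\vdash Y_2\Leftrightarrow X_1\vdash\mathrm{P}Y_2$.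 Identity $p_i\vdash p_i$; Cut: from $X\vdash A$ and $A\vdash Y$ infer $X\vdash Y$. Structural: from $X\hat\sqcap_i\hat1_i\vdash Y$ infer $X\vdash Y$; from $X\vdash Y\check\sqcup_i\check0_i$ infer $X\vdash Y$; exchange (from $X\hat\sqcap_iY\vdash Z$ infer $Y\hat\sqcap_iX\vdash Z$; from $X\vdash Y\check\sqcup_iZ$ infer $X\vdash Z\check\sqcup_iY$); associativity (from $(X\hat\sqcap_iY)\hat\sqcap_iZ\vdash W$ infer $X\hat\sqcap_i(Y\hat\sqcap_iZ)\vdash W$; from $X\vdash(Y\check\sqcup_iZ)\check\sqcup_iW$ infer $X\vdash Y\check\sqcup_i(Z\check\sqcup_iW)$); weakening (from $X\vdash Z$ infer $X\hat\sqcap_iY\vdash Z$; from $X\vdash Y$ infer $X\vdash Y\check\sqcup_iZ$); contraction (from $X\hat\sqcap_iX\vdash Z$ infer $X\vdash Z$; from $X\vdash Y\check\sqcup_iY$ infer $X\vdash Y$). Operational: from $\hat1_i\vdash X$ infer $1_i\vdash X$; axiom $\hat1_i\vdash1_i$; axiom $0_i\vdash\check0_i$; from $X\vdash\check0_i$ infer $X\vdash0_i$; from $A\hat\sqcap_iB\vdash X$ infer $A\sqcap_iB\vdash X$; from $X\vdash A$ and $Y\vdash B$ infer $X\hat\sqcap_iY\vdash A\sqcap_iB$; from $A\vdash X$ and $B\vdash Y$ infer $A\sqcup_iB\vdash X\check\sqcup_iY$; from $X\vdash A\check\sqcup_iB$ infer $X\vdash A\sqcup_iB$. Multi-type structural: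 $X_1\vdash Y_1\Leftrightarrow\mathrm{N}X_1\vdash\mathrm{N}Y_1$; $X_2\vdash Y_2\Leftrightarrow\mathrm{P}X_2\vdash\mathrm{P}Y_2$; from $\check0_1\vdash X_1$ infer $\mathrm{P}\check0_2\vdash X_1$; from $X_1\vdash\hat1_1$ infer $X_1\vdash\mathrm{P}\hat1_2$. Multi-type operational: from $\mathrm{N}A_1\vdash X_2$ infer $\mathrm{n}A_1\vdash X_2$; from $X_2\vdash\mathrm{N}A_1$ infer $X_2\vdash\mathrm{n}A_1$; from $\mathrm{P}A_2\vdash X_1$ infer $\mathrm{p}A_2\vdash X_1$; from $X_1\vdash\mathrm{P}A_2$ infer $X_1\vdash\mathrm{p}A_2$. D.CBL adds formulas ${\sim}_iA_i$, structures $\ast_iX_i$, and rules: $\ast_iX\vdash Y\Leftrightarrow\ast_iY\vdash X$; $X\vdash\ast_iY\Leftrightarrow Y\vdash\ast_iX$; $X\vdash Y\Leftrightarrow\ast_iY\vdash\ast_iX$; from $\mathrm{N}\ast_1X_1\vdash Y_2$ infer $\ast_2\mathrm{N}X_1\vdash Y_2$; from $X_2\vdash\mathrm{N}\ast_1Y_1$ infer $X_2\vdash\ast_2\mathrm{N}Y_1$; from $\ast_iA\vdash Y$ infer ${\sim}_iA\vdash Y$; from $X\vdash\ast_iA$ infer $X\vdash{\sim}_iA$. A formula is regarded as a structure; derivations are finite trees of rule applications with axioms at the leaves. *)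

theory Defs
  imports Main
begin

text \<open>Atoms of each type are indexed by natural numbers. The negations Neg1/Neg2
 (formulas) and Star1/Star2 (structures) belong only to D.CBL; D.BL is the
 fragment without them.\<close>

datatype fm1 = At1 nat | One1 | Zero1 | Pf fm2 | Meet1 fm1 fm1 | Join1 fm1 fm1 | Neg1 fm1
and fm2 = At2 nat | One2 | Zero2 | Nf fm1 | Meet2 fm2 fm2 | Join2 fm2 fm2 | Neg2 fm2

datatype fm = T1 fm1 | T2 fm2

text \<open>Structures: F = formula, I = hat 1, O = check 0, P/N the multi-type structural
 connectives, SMeet = hat meet, SJoin = check join, SImp = check right arrow,
 SDif = hat left arrow, Star = asterisk.\<close>
datatype st1 = F1 fm1 | I1 | O1 | P st2 | SMeet1 st1 st1 | SJoin1 st1 st1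
   | SImp1 st1 st1 | SDif1 st1 st1 | Star1 st1
and st2 = F2 fm2 | I2 | O2 | N st1 | SMeet2 st2 st2 | SJoin2 st2 st2
   | SImp2 st2 st2 | SDif2 st2 st2 | Star2 st2

datatype seq = Sq1 st1 st1 | Sq2 st2 st2

primrec sub1 :: "fm1 \<Rightarrow> fm set" and sub2 :: "fm2 \<Rightarrow> fm set" where
  "sub1 (At1 p) = {T1 (At1 p)}"
| "sub1 One1 = {T1 One1}"
| "sub1 Zero1 = {T1 Zero1}"
| "sub1 (Pf A) = insert (T1 (Pf A)) (sub2 A)"
| "sub1 (Meet1 A B) = insert (T1 (Meet1 A B)) (sub1 A \<union> sub1 B)"
| "sub1 (Join1 A B) = insert (T1 (Join1 A B)) (sub1 A \<union> sub1 B)"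
| "sub1 (Neg1 A) = insert (T1 (Neg1 A)) (sub1 A)"
| "sub2 (At2 p) = {T2 (At2 p)}"
| "sub2 One2 = {T2 One2}"
| "sub2 Zero2 = {T2 Zero2}"
| "sub2 (Nf A) = insert (T2 (Nf A)) (sub1 A)"
| "sub2 (Meet2 A B) = insert (T2 (Meet2 A B)) (sub2 A \<union> sub2 B)"
| "sub2 (Join2 A B) = insert (T2 (Join2 A B)) (sub2 A \<union> sub2 B)"
| "sub2 (Neg2 A) = insert (T2 (Neg2 A)) (sub2 A)"

fun subfm :: "fm \<Rightarrow> fm set" where
  "subfm (T1 A) = sub1 A"
| "subfm (T2 A) = sub2 A"

primrec fmls1 :: "st1 \<Rightarrow> fm set" and fmls2 :: "st2 \<Rightarrow> fm set" where
  "fmls1 (F1 A) = {T1 A}"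
| "fmls1 I1 = {}"
| "fmls1 O1 = {}"
| "fmls1 (P X) = fmls2 X"
| "fmls1 (SMeet1 X Y) = fmls1 X \<union> fmls1 Y"
| "fmls1 (SJoin1 X Y) = fmls1 X \<union> fmls1 Y"
| "fmls1 (SImp1 X Y) = fmls1 X \<union> fmls1 Y"
| "fmls1 (SDif1 X Y) = fmls1 X \<union> fmls1 Y"
| "fmls1 (Star1 X) = fmls1 X"
| "fmls2 (F2 A) = {T2 A}"
| "fmls2 I2 = {}"
| "fmls2 O2 = {}"
| "fmls2 (N X) = fmls1 X"
| "fmls2 (SMeet2 X Y) = fmls2 X \<union> fmls2 Y"
| "fmls2 (SJoin2 X Y) = fmls2 X \<union> fmls2 Y"
| "fmls2 (SImp2 X Y) = fmls2 X \<union> fmls2 Y"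
| "fmls2 (SDif2 X Y) = fmls2 X \<union> fmls2 Y"
| "fmls2 (Star2 X) = fmls2 X"

fun fmls_seq :: "seq \<Rightarrow> fm set" where
  "fmls_seq (Sq1 X Y) = fmls1 X \<union> fmls1 Y"
| "fmls_seq (Sq2 X Y) = fmls2 X \<union> fmls2 Y"

primrec blf1 :: "fm1 \<Rightarrow> bool" and blf2 :: "fm2 \<Rightarrow> bool" where
  "blf1 (At1 p) = True"
| "blf1 One1 = True"
| "blf1 Zero1 = True"
| "blf1 (Pf A) = blf2 A"
| "blf1 (Meet1 A B) = (blf1 A \<and> blf1 B)"
| "blf1 (Join1 A B) = (blf1 A \<and> blf1 B)"
| "blf1 (Neg1 A) = False"
| "blf2 (At2 p) = True"
| "blf2 One2 = True"
| "blf2 Zero2 = True"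
| "blf2 (Nf A) = blf1 A"
| "blf2 (Meet2 A B) = (blf2 A \<and> blf2 B)"
| "blf2 (Join2 A B) = (blf2 A \<and> blf2 B)"
| "blf2 (Neg2 A) = False"

primrec bls1 :: "st1 \<Rightarrow> bool" and bls2 :: "st2 \<Rightarrow> bool" where
  "bls1 (F1 A) = blf1 A"
| "bls1 I1 = True"
| "bls1 O1 = True"
| "bls1 (P X) = bls2 X"
| "bls1 (SMeet1 X Y) = (bls1 X \<and> bls1 Y)"
| "bls1 (SJoin1 X Y) = (bls1 X \<and> bls1 Y)"
| "bls1 (SImp1 X Y) = (bls1 X \<and> bls1 Y)"
| "bls1 (SDif1 X Y) = (bls1 X \<and> bls1 Y)"
| "bls1 (Star1 X) = False"
| "bls2 (F2 A) = blf2 A"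
| "bls2 I2 = True"
| "bls2 O2 = True"
| "bls2 (N X) = bls1 X"
| "bls2 (SMeet2 X Y) = (bls2 X \<and> bls2 Y)"
| "bls2 (SJoin2 X Y) = (bls2 X \<and> bls2 Y)"
| "bls2 (SImp2 X Y) = (bls2 X \<and> bls2 Y)"
| "bls2 (SDif2 X Y) = (bls2 X \<and> bls2 Y)"
| "bls2 (Star2 X) = False"

fun bl_seq :: "seq \<Rightarrow> bool" where
  "bl_seq (Sq1 X Y) = (bls1 X \<and> bls1 Y)"
| "bl_seq (Sq2 X Y) = (bls2 X \<and> bls2 Y)"

inductive cut_rule :: "seq list \<Rightarrow> seq \<Rightarrow> bool" where
  "cut_rule [Sq1 X (F1 A), Sq1 (F1 A) Y] (Sq1 X Y)"
| "cut_rule [Sq2 X (F2 A), Sq2 (F2 A) Y] (Sq2 X Y)"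

inductive bl_rule :: "seq list \<Rightarrow> seq \<Rightarrow> bool" where
  "bl_rule [Sq1 (SMeet1 X Y) Z] (Sq1 X (SImp1 Y Z))"
| "bl_rule [Sq1 X (SImp1 Y Z)] (Sq1 (SMeet1 X Y) Z)"
| "bl_rule [Sq2 (SMeet2 X Y) Z] (Sq2 X (SImp2 Y Z))"
| "bl_rule [Sq2 X (SImp2 Y Z)] (Sq2 (SMeet2 X Y) Z)"
| "bl_rule [Sq1 X (SJoin1 Y Z)] (Sq1 (SDif1 X Y) Z)"
| "bl_rule [Sq1 (SDif1 X Y) Z] (Sq1 X (SJoin1 Y Z))"
| "bl_rule [Sq2 X (SJoin2 Y Z)] (Sq2 (SDif2 X Y) Z)"
| "bl_rule [Sq2 (SDif2 X Y) Z] (Sq2 X (SJoin2 Y Z))"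
| "bl_rule [Sq1 (P X2) Y1] (Sq2 X2 (N Y1))"
| "bl_rule [Sq2 X2 (N Y1)] (Sq1 (P X2) Y1)"
| "bl_rule [Sq2 (N X1) Y2] (Sq1 X1 (P Y2))"
| "bl_rule [Sq1 X1 (P Y2)] (Sq2 (N X1) Y2)"
| "bl_rule [] (Sq1 (F1 (At1 p)) (F1 (At1 p)))"
| "bl_rule [] (Sq2 (F2 (At2 p)) (F2 (At2 p)))"
| "bl_rule [Sq1 (SMeet1 X I1) Y] (Sq1 X Y)"
| "bl_rule [Sq2 (SMeet2 X I2) Y] (Sq2 X Y)"
| "bl_rule [Sq1 X (SJoin1 Y O1)] (Sq1 X Y)"
| "bl_rule [Sq2 X (SJoin2 Y O2)] (Sq2 X Y)"
| "bl_rule [Sq1 (SMeet1 X Y) Z] (Sq1 (SMeet1 Y X) Z)"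
| "bl_rule [Sq2 (SMeet2 X Y) Z] (Sq2 (SMeet2 Y X) Z)"
| "bl_rule [Sq1 X (SJoin1 Y Z)] (Sq1 X (SJoin1 Z Y))"
| "bl_rule [Sq2 X (SJoin2 Y Z)] (Sq2 X (SJoin2 Z Y))"
| "bl_rule [Sq1 (SMeet1 (SMeet1 X Y) Z) W] (Sq1 (SMeet1 X (SMeet1 Y Z)) W)"
| "bl_rule [Sq2 (SMeet2 (SMeet2 X Y) Z) W] (Sq2 (SMeet2 X (SMeet2 Y Z)) W)"
| "bl_rule [Sq1 X (SJoin1 (SJoin1 Y Z) W)] (Sq1 X (SJoin1 Y (SJoin1 Z W)))"
| "bl_rule [Sq2 X (SJoin2 (SJoin2 Y Z) W)] (Sq2 X (SJoin2 Y (SJoin2 Z W)))"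
| "bl_rule [Sq1 X Z] (Sq1 (SMeet1 X Y) Z)"
| "bl_rule [Sq2 X Z] (Sq2 (SMeet2 X Y) Z)"
| "bl_rule [Sq1 X Y] (Sq1 X (SJoin1 Y Z))"
| "bl_rule [Sq2 X Y] (Sq2 X (SJoin2 Y Z))"
| "bl_rule [Sq1 (SMeet1 X X) Z] (Sq1 X Z)"
| "bl_rule [Sq2 (SMeet2 X X) Z] (Sq2 X Z)"
| "bl_rule [Sq1 X (SJoin1 Y Y)] (Sq1 X Y)"
| "bl_rule [Sq2 X (SJoin2 Y Y)] (Sq2 X Y)"
| "bl_rule [Sq1 I1 X] (Sq1 (F1 One1) X)"
| "bl_rule [Sq2 I2 X] (Sq2 (F2 One2) X)"
| "bl_rule [] (Sq1 I1 (F1 One1))"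
| "bl_rule [] (Sq2 I2 (F2 One2))"
| "bl_rule [] (Sq1 (F1 Zero1) O1)"
| "bl_rule [] (Sq2 (F2 Zero2) O2)"
| "bl_rule [Sq1 X O1] (Sq1 X (F1 Zero1))"
| "bl_rule [Sq2 X O2] (Sq2 X (F2 Zero2))"
| "bl_rule [Sq1 (SMeet1 (F1 A) (F1 B)) X] (Sq1 (F1 (Meet1 A B)) X)"
| "bl_rule [Sq2 (SMeet2 (F2 A) (F2 B)) X] (Sq2 (F2 (Meet2 A B)) X)"
| "bl_rule [Sq1 X (F1 A), Sq1 Y (F1 B)] (Sq1 (SMeet1 X Y) (F1 (Meet1 A B)))"
| "bl_rule [Sq2 X (F2 A), Sq2 Y (F2 B)] (Sq2 (SMeet2 X Y) (F2 (Meet2 A B)))"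
| "bl_rule [Sq1 (F1 A) X, Sq1 (F1 B) Y] (Sq1 (F1 (Join1 A B)) (SJoin1 X Y))"
| "bl_rule [Sq2 (F2 A) X, Sq2 (F2 B) Y] (Sq2 (F2 (Join2 A B)) (SJoin2 X Y))"
| "bl_rule [Sq1 X (SJoin1 (F1 A) (F1 B))] (Sq1 X (F1 (Join1 A B)))"
| "bl_rule [Sq2 X (SJoin2 (F2 A) (F2 B))] (Sq2 X (F2 (Join2 A B)))"
| "bl_rule [Sq1 X1 Y1] (Sq2 (N X1) (N Y1))"
| "bl_rule [Sq2 (N X1) (N Y1)] (Sq1 X1 Y1)"
| "bl_rule [Sq2 X2 Y2] (Sq1 (P X2) (P Y2))"
| "bl_rule [Sq1 (P X2) (P Y2)] (Sq2 X2 Y2)"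
| "bl_rule [Sq1 O1 X1] (Sq1 (P O2) X1)"
| "bl_rule [Sq1 X1 I1] (Sq1 X1 (P I2))"
| "bl_rule [Sq2 (N (F1 A)) X2] (Sq2 (F2 (Nf A)) X2)"
| "bl_rule [Sq2 X2 (N (F1 A))] (Sq2 X2 (F2 (Nf A)))"
| "bl_rule [Sq1 (P (F2 A)) X1] (Sq1 (F1 (Pf A)) X1)"
| "bl_rule [Sq1 X1 (P (F2 A))] (Sq1 X1 (F1 (Pf A)))"

inductive cbl_extra :: "seq list \<Rightarrow> seq \<Rightarrow> bool" where
  "cbl_extra [Sq1 (Star1 X) Y] (Sq1 (Star1 Y) X)"
| "cbl_extra [Sq2 (Star2 X) Y] (Sq2 (Star2 Y) X)"
| "cbl_extra [Sq1 X (Star1 Y)] (Sq1 Y (Star1 X))"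
| "cbl_extra [Sq2 X (Star2 Y)] (Sq2 Y (Star2 X))"
| "cbl_extra [Sq1 X Y] (Sq1 (Star1 Y) (Star1 X))"
| "cbl_extra [Sq1 (Star1 Y) (Star1 X)] (Sq1 X Y)"
| "cbl_extra [Sq2 X Y] (Sq2 (Star2 Y) (Star2 X))"
| "cbl_extra [Sq2 (Star2 Y) (Star2 X)] (Sq2 X Y)"
| "cbl_extra [Sq2 (N (Star1 X1)) Y2] (Sq2 (Star2 (N X1)) Y2)"
| "cbl_extra [Sq2 X2 (N (Star1 Y1))] (Sq2 X2 (Star2 (N Y1)))"
| "cbl_extra [Sq1 (Star1 (F1 A)) Y] (Sq1 (F1 (Neg1 A)) Y)"
| "cbl_extra [Sq2 (Star2 (F2 A)) Y] (Sq2 (F2 (Neg2 A)) Y)"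
| "cbl_extra [Sq1 X (Star1 (F1 A))] (Sq1 X (F1 (Neg1 A)))"
| "cbl_extra [Sq2 X (Star2 (F2 A))] (Sq2 X (F2 (Neg2 A)))"

datatype dtree = Nd seq "dtree list"

fun root :: "dtree \<Rightarrow> seq" where
  "root (Nd s ts) = s"

fun valid :: "(seq list \<Rightarrow> seq \<Rightarrow> bool) \<Rightarrow> dtree \<Rightarrow> bool" where
  "valid R (Nd s ts) = (R (map root ts) s \<and> (\<forall>t\<in>set ts. valid R t))"

fun seqs :: "dtree \<Rightarrow> seq set" where
  "seqs (Nd s ts) = insert s (\<Union>t\<in>set ts. seqs t)"

definition fmls_tree :: "dtree \<Rightarrow> fm set" where
  "fmls_tree T = (\<Union>s\<in>seqs T. fmls_seq s)"

definition DBL_deriv :: "dtree \<Rightarrow> bool" where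
  "DBL_deriv T \<longleftrightarrow> valid (\<lambda>ps c. bl_rule ps c \<or> cut_rule ps c) T \<and> (\<forall>s\<in>seqs T. bl_seq s)"

definition DBL_cutfree :: "dtree \<Rightarrow> bool" where
  "DBL_cutfree T \<longleftrightarrow> valid bl_rule T \<and> (\<forall>s\<in>seqs T. bl_seq s)"

definition DCBL_deriv :: "dtree \<Rightarrow> bool" where
  "DCBL_deriv T \<longleftrightarrow> valid (\<lambda>ps c. bl_rule ps c \<or> cbl_extra ps c \<or> cut_rule ps c) T"

definition DCBL_cutfree :: "dtree \<Rightarrow> bool" where
  "DCBL_cutfree T \<longleftrightarrow> valid (\<lambda>ps c. bl_rule ps c \<or> cbl_extra ps c) T"

end

theory Submission
  imports Defs
begin

(* Cut is admissible, by induction on the cut formula A (Belnap's method). Given derivations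
   of X |- A and A |- Y, trace the antecedent occurrences of A through the derivation of
   A |- Y and replace them by X. No rule except an introduction rule for A inspects A, so
   every rule instance survives, except a left introduction in which the replaced occurrence
   is principal. At such a point, with conclusion A |- Y', trace the succedent occurrences of
   A through the derivation of X |- A and replace them by Y', until a right introduction of A
   is met. The cut of two introductions of A is reduced, using the display postulates, to
   cuts on immediate subformulas of A. The subformula property holds because every formula
   in a premise of a cut-free rule is a subformula of a formula in its conclusion. *)

definition cf_rule :: "bool \<Rightarrow> seq list \<Rightarrow> seq \<Rightarrow> bool" where
  "cf_rule cbl ps s \<longleftrightarrow> bl_rule ps s \<or> (cbl \<and> cbl_extra ps s)"

lemma cf_rule_False: "cf_rule False = bl_rule"
  by (simp add: cf_rule_def fun_eq_iff)

lemma cf_rule_True: "cf_rule True = (\<lambda>ps s. bl_rule ps s \<or> cbl_extra ps s)"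
  by (simp add: cf_rule_def fun_eq_iff)

inductive derivable :: "bool \<Rightarrow> seq \<Rightarrow> bool" for cbl where
  by_rule: "cf_rule cbl ps s \<Longrightarrow> \<forall>p\<in>set ps. derivable cbl p \<Longrightarrow> derivable cbl s"

lemma derivable_bl_step: "derivable cbl p \<Longrightarrow> bl_rule [p] s \<Longrightarrow> derivable cbl s"
  by (rule by_rule[of cbl "[p]"]) (simp_all add: cf_rule_def)

lemma derivable_cbl_step: "derivable cbl p \<Longrightarrow> cbl \<Longrightarrow> cbl_extra [p] s \<Longrightarrow> derivable cbl s"
  by (rule by_rule[of cbl "[p]"]) (simp_all add: cf_rule_def)

subsection \<open>Replacing occurrences of the cut formula\<close>

text \<open>\<open>X'\<close> arises from \<open>X\<close> by replacing some occurrences of \<open>F1 A1\<close> by \<open>U1\<close> and of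
  \<open>F2 A2\<close> by \<open>U2\<close>; the flag \<open>act\<close> tracks the polarity of the current position, and only
  positions where it holds are eligible.\<close>

inductive repl1 and repl2 for A1 :: fm1 and A2 :: fm2 and U1 :: st1 and U2 :: st2 where
  "repl1 A1 A2 U1 U2 act (F1 B) (F1 B)"
| "act \<Longrightarrow> repl1 A1 A2 U1 U2 act (F1 A1) U1"
| "repl1 A1 A2 U1 U2 act I1 I1"
| "repl1 A1 A2 U1 U2 act O1 O1"
| "repl2 A1 A2 U1 U2 act X X' \<Longrightarrow> repl1 A1 A2 U1 U2 act (P X) (P X')"
| "repl1 A1 A2 U1 U2 act X X' \<Longrightarrow> repl1 A1 A2 U1 U2 act Y Y' \<Longrightarrow>
     repl1 A1 A2 U1 U2 act (SMeet1 X Y) (SMeet1 X' Y')"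
| "repl1 A1 A2 U1 U2 act X X' \<Longrightarrow> repl1 A1 A2 U1 U2 act Y Y' \<Longrightarrow>
     repl1 A1 A2 U1 U2 act (SJoin1 X Y) (SJoin1 X' Y')"
| "repl1 A1 A2 U1 U2 (\<not> act) X X' \<Longrightarrow> repl1 A1 A2 U1 U2 act Y Y' \<Longrightarrow>
     repl1 A1 A2 U1 U2 act (SImp1 X Y) (SImp1 X' Y')"
| "repl1 A1 A2 U1 U2 act X X' \<Longrightarrow> repl1 A1 A2 U1 U2 (\<not> act) Y Y' \<Longrightarrow>
     repl1 A1 A2 U1 U2 act (SDif1 X Y) (SDif1 X' Y')"
| "repl1 A1 A2 U1 U2 (\<not> act) X X' \<Longrightarrow> repl1 A1 A2 U1 U2 act (Star1 X) (Star1 X')"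
| "repl2 A1 A2 U1 U2 act (F2 B) (F2 B)"
| "act \<Longrightarrow> repl2 A1 A2 U1 U2 act (F2 A2) U2"
| "repl2 A1 A2 U1 U2 act I2 I2"
| "repl2 A1 A2 U1 U2 act O2 O2"
| "repl1 A1 A2 U1 U2 act X X' \<Longrightarrow> repl2 A1 A2 U1 U2 act (N X) (N X')"
| "repl2 A1 A2 U1 U2 act X X' \<Longrightarrow> repl2 A1 A2 U1 U2 act Y Y' \<Longrightarrow>
     repl2 A1 A2 U1 U2 act (SMeet2 X Y) (SMeet2 X' Y')"
| "repl2 A1 A2 U1 U2 act X X' \<Longrightarrow> repl2 A1 A2 U1 U2 act Y Y' \<Longrightarrow>
     repl2 A1 A2 U1 U2 act (SJoin2 X Y) (SJoin2 X' Y')"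
| "repl2 A1 A2 U1 U2 (\<not> act) X X' \<Longrightarrow> repl2 A1 A2 U1 U2 act Y Y' \<Longrightarrow>
     repl2 A1 A2 U1 U2 act (SImp2 X Y) (SImp2 X' Y')"
| "repl2 A1 A2 U1 U2 act X X' \<Longrightarrow> repl2 A1 A2 U1 U2 (\<not> act) Y Y' \<Longrightarrow>
     repl2 A1 A2 U1 U2 act (SDif2 X Y) (SDif2 X' Y')"
| "repl2 A1 A2 U1 U2 (\<not> act) X X' \<Longrightarrow> repl2 A1 A2 U1 U2 act (Star2 X) (Star2 X')"

lemma repl_refl: "repl1 A1 A2 U1 U2 act X X" "repl2 A1 A2 U1 U2 act' Y Y"
  by (induction X and Y arbitrary: act and act') (auto intro: repl1_repl2.intros)

lemma repl_simps:
  "repl1 A1 A2 U1 U2 act (F1 B) Z \<longleftrightarrow> Z = F1 B \<or> (act \<and> B = A1 \<and> Z = U1)"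
  "repl1 A1 A2 U1 U2 act I1 Z \<longleftrightarrow> Z = I1"
  "repl1 A1 A2 U1 U2 act O1 Z \<longleftrightarrow> Z = O1"
  "repl1 A1 A2 U1 U2 act (P V) Z \<longleftrightarrow> (\<exists>V'. Z = P V' \<and> repl2 A1 A2 U1 U2 act V V')"
  "repl1 A1 A2 U1 U2 act (SMeet1 X Y) Z \<longleftrightarrow>
     (\<exists>X' Y'. Z = SMeet1 X' Y' \<and> repl1 A1 A2 U1 U2 act X X' \<and> repl1 A1 A2 U1 U2 act Y Y')"
  "repl1 A1 A2 U1 U2 act (SJoin1 X Y) Z \<longleftrightarrow>
     (\<exists>X' Y'. Z = SJoin1 X' Y' \<and> repl1 A1 A2 U1 U2 act X X' \<and> repl1 A1 A2 U1 U2 act Y Y')"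
  "repl1 A1 A2 U1 U2 act (SImp1 X Y) Z \<longleftrightarrow>
     (\<exists>X' Y'. Z = SImp1 X' Y' \<and> repl1 A1 A2 U1 U2 (\<not> act) X X' \<and> repl1 A1 A2 U1 U2 act Y Y')"
  "repl1 A1 A2 U1 U2 act (SDif1 X Y) Z \<longleftrightarrow>
     (\<exists>X' Y'. Z = SDif1 X' Y' \<and> repl1 A1 A2 U1 U2 act X X' \<and> repl1 A1 A2 U1 U2 (\<not> act) Y Y')"
  "repl1 A1 A2 U1 U2 act (Star1 X) Z \<longleftrightarrow> (\<exists>X'. Z = Star1 X' \<and> repl1 A1 A2 U1 U2 (\<not> act) X X')"
  "repl2 A1 A2 U1 U2 act (F2 C) W \<longleftrightarrow> W = F2 C \<or> (act \<and> C = A2 \<and> W = U2)"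
  "repl2 A1 A2 U1 U2 act I2 W \<longleftrightarrow> W = I2"
  "repl2 A1 A2 U1 U2 act O2 W \<longleftrightarrow> W = O2"
  "repl2 A1 A2 U1 U2 act (N X) W \<longleftrightarrow> (\<exists>X'. W = N X' \<and> repl1 A1 A2 U1 U2 act X X')"
  "repl2 A1 A2 U1 U2 act (SMeet2 V T) W \<longleftrightarrow>
     (\<exists>V' T'. W = SMeet2 V' T' \<and> repl2 A1 A2 U1 U2 act V V' \<and> repl2 A1 A2 U1 U2 act T T')"
  "repl2 A1 A2 U1 U2 act (SJoin2 V T) W \<longleftrightarrow>
     (\<exists>V' T'. W = SJoin2 V' T' \<and> repl2 A1 A2 U1 U2 act V V' \<and> repl2 A1 A2 U1 U2 act T T')"
  "repl2 A1 A2 U1 U2 act (SImp2 V T) W \<longleftrightarrow>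
     (\<exists>V' T'. W = SImp2 V' T' \<and> repl2 A1 A2 U1 U2 (\<not> act) V V' \<and> repl2 A1 A2 U1 U2 act T T')"
  "repl2 A1 A2 U1 U2 act (SDif2 V T) W \<longleftrightarrow>
     (\<exists>V' T'. W = SDif2 V' T' \<and> repl2 A1 A2 U1 U2 act V V' \<and> repl2 A1 A2 U1 U2 (\<not> act) T T')"
  "repl2 A1 A2 U1 U2 act (Star2 V) W \<longleftrightarrow> (\<exists>V'. W = Star2 V' \<and> repl2 A1 A2 U1 U2 (\<not> act) V V')"
  by (auto elim: repl1.cases repl2.cases intro: repl1_repl2.intros)

text \<open>With \<open>pol = True\<close> occurrences in antecedent position are replaced, with
  \<open>pol = False\<close> those in succedent position.\<close>

fun repl_seq :: "bool \<Rightarrow> fm1 \<Rightarrow> fm2 \<Rightarrow> st1 \<Rightarrow> st2 \<Rightarrow> seq \<Rightarrow> seq \<Rightarrow> bool" where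
  "repl_seq pol A1 A2 U1 U2 (Sq1 X Y) s' \<longleftrightarrow>
     (\<exists>X' Y'. s' = Sq1 X' Y' \<and> repl1 A1 A2 U1 U2 pol X X' \<and> repl1 A1 A2 U1 U2 (\<not> pol) Y Y')"
| "repl_seq pol A1 A2 U1 U2 (Sq2 X Y) s' \<longleftrightarrow>
     (\<exists>X' Y'. s' = Sq2 X' Y' \<and> repl2 A1 A2 U1 U2 pol X X' \<and> repl2 A1 A2 U1 U2 (\<not> pol) Y Y')"

inductive left_intro :: "bool \<Rightarrow> seq list \<Rightarrow> seq \<Rightarrow> bool" for cbl where
  At1: "left_intro cbl [] (Sq1 (F1 (At1 p)) (F1 (At1 p)))"
| At2: "left_intro cbl [] (Sq2 (F2 (At2 p)) (F2 (At2 p)))"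
| One1: "left_intro cbl [Sq1 I1 X] (Sq1 (F1 One1) X)"
| One2: "left_intro cbl [Sq2 I2 X] (Sq2 (F2 One2) X)"
| Zero1: "left_intro cbl [] (Sq1 (F1 Zero1) O1)"
| Zero2: "left_intro cbl [] (Sq2 (F2 Zero2) O2)"
| Meet1: "left_intro cbl [Sq1 (SMeet1 (F1 A) (F1 B)) X] (Sq1 (F1 (Meet1 A B)) X)"
| Meet2: "left_intro cbl [Sq2 (SMeet2 (F2 A) (F2 B)) X] (Sq2 (F2 (Meet2 A B)) X)"
| Join1: "left_intro cbl [Sq1 (F1 A) X, Sq1 (F1 B) Y] (Sq1 (F1 (Join1 A B)) (SJoin1 X Y))"
| Join2: "left_intro cbl [Sq2 (F2 A) X, Sq2 (F2 B) Y] (Sq2 (F2 (Join2 A B)) (SJoin2 X Y))"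
| Pf: "left_intro cbl [Sq1 (P (F2 A)) X] (Sq1 (F1 (Pf A)) X)"
| Nf: "left_intro cbl [Sq2 (N (F1 A)) X] (Sq2 (F2 (Nf A)) X)"
| Neg1: "cbl \<Longrightarrow> left_intro cbl [Sq1 (Star1 (F1 A)) X] (Sq1 (F1 (Neg1 A)) X)"
| Neg2: "cbl \<Longrightarrow> left_intro cbl [Sq2 (Star2 (F2 A)) X] (Sq2 (F2 (Neg2 A)) X)"

inductive right_intro :: "bool \<Rightarrow> seq list \<Rightarrow> seq \<Rightarrow> bool" for cbl where
  At1: "right_intro cbl [] (Sq1 (F1 (At1 p)) (F1 (At1 p)))"
| At2: "right_intro cbl [] (Sq2 (F2 (At2 p)) (F2 (At2 p)))"
| One1: "right_intro cbl [] (Sq1 I1 (F1 One1))"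
| One2: "right_intro cbl [] (Sq2 I2 (F2 One2))"
| Zero1: "right_intro cbl [Sq1 X O1] (Sq1 X (F1 Zero1))"
| Zero2: "right_intro cbl [Sq2 X O2] (Sq2 X (F2 Zero2))"
| Meet1: "right_intro cbl [Sq1 X (F1 A), Sq1 Y (F1 B)] (Sq1 (SMeet1 X Y) (F1 (Meet1 A B)))"
| Meet2: "right_intro cbl [Sq2 X (F2 A), Sq2 Y (F2 B)] (Sq2 (SMeet2 X Y) (F2 (Meet2 A B)))"
| Join1: "right_intro cbl [Sq1 X (SJoin1 (F1 A) (F1 B))] (Sq1 X (F1 (Join1 A B)))"
| Join2: "right_intro cbl [Sq2 X (SJoin2 (F2 A) (F2 B))] (Sq2 X (F2 (Join2 A B)))"
| Pf: "right_intro cbl [Sq1 X (P (F2 A))] (Sq1 X (F1 (Pf A)))"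
| Nf: "right_intro cbl [Sq2 X (N (F1 A))] (Sq2 X (F2 (Nf A)))"
| Neg1: "cbl \<Longrightarrow> right_intro cbl [Sq1 X (Star1 (F1 A))] (Sq1 X (F1 (Neg1 A)))"
| Neg2: "cbl \<Longrightarrow> right_intro cbl [Sq2 X (Star2 (F2 A))] (Sq2 X (F2 (Neg2 A)))"

lemma left_intro_cf_rule: "left_intro cbl ps s \<Longrightarrow> cf_rule cbl ps s"
  by (induction rule: left_intro.induct) (auto simp: cf_rule_def intro: bl_rule.intros cbl_extra.intros)

lemma right_intro_cf_rule: "right_intro cbl ps s \<Longrightarrow> cf_rule cbl ps s"
  by (induction rule: right_intro.induct) (auto simp: cf_rule_def intro: bl_rule.intros cbl_extra.intros)

text \<open>Every rule is closed under replacing a formula by a structure at a fixed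
  polarity, except where the replaced occurrence is principal; in a display calculus
  that only happens in an introduction rule for the formula on its own side.\<close>

lemma cf_rule_repl:
  assumes "cf_rule cbl ps s" and "repl_seq pol A1 A2 U1 U2 s s'"
  shows "\<exists>ps'. list_all2 (repl_seq pol A1 A2 U1 U2) ps ps' \<and>
    (cf_rule cbl ps' s'
     \<or> pol \<and> (\<exists>Y. s' = Sq1 U1 Y \<and> left_intro cbl ps' (Sq1 (F1 A1) Y))
     \<or> pol \<and> (\<exists>Y. s' = Sq2 U2 Y \<and> left_intro cbl ps' (Sq2 (F2 A2) Y))
     \<or> \<not> pol \<and> (\<exists>X. s' = Sq1 X U1 \<and> right_intro cbl ps' (Sq1 X (F1 A1)))
     \<or> \<not> pol \<and> (\<exists>X. s' = Sq2 X U2 \<and> right_intro cbl ps' (Sq2 X (F2 A2))))"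
proof -
  from assms(1) consider "bl_rule ps s" | "cbl" "cbl_extra ps s"
    unfolding cf_rule_def by blast
  then show ?thesis
  proof cases
    case 1
    then show ?thesis using assms(2)
      by (cases rule: bl_rule.cases; simp add: repl_simps;
          fastforce simp: repl_simps cf_rule_def intro: bl_rule.intros left_intro.intros
            right_intro.intros repl_refl)
  next
    case 2
    from \<open>cbl_extra ps s\<close> assms(2) \<open>cbl\<close> show ?thesis
      by (cases rule: cbl_extra.cases; simp add: repl_simps;
          fastforce simp: repl_simps cf_rule_def intro: cbl_extra.intros left_intro.intros
            right_intro.intros repl_refl)
  qed
qed

subsection \<open>Principal cuts\<close>

fun fm_size :: "fm \<Rightarrow> nat" where
  "fm_size (T1 A) = size A"
| "fm_size (T2 A) = size A"

fun cut_admissible :: "bool \<Rightarrow> fm \<Rightarrow> bool" where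
  "cut_admissible cbl (T1 A) \<longleftrightarrow> (\<forall>X Y. derivable cbl (Sq1 X (F1 A)) \<longrightarrow>
     derivable cbl (Sq1 (F1 A) Y) \<longrightarrow> derivable cbl (Sq1 X Y))"
| "cut_admissible cbl (T2 A) \<longleftrightarrow> (\<forall>X Y. derivable cbl (Sq2 X (F2 A)) \<longrightarrow>
     derivable cbl (Sq2 (F2 A) Y) \<longrightarrow> derivable cbl (Sq2 X Y))"

definition cut_admissible_below :: "bool \<Rightarrow> fm \<Rightarrow> bool" where
  "cut_admissible_below cbl F \<longleftrightarrow> (\<forall>G. fm_size G < fm_size F \<longrightarrow> cut_admissible cbl G)"

lemma cut_admissibleD1:
  "cut_admissible cbl (T1 A) \<Longrightarrow> derivable cbl (Sq1 X (F1 A)) \<Longrightarrow> derivable cbl (Sq1 (F1 A) Y) \<Longrightarrow>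
   derivable cbl (Sq1 X Y)"
  by simp

lemma cut_admissibleD2:
  "cut_admissible cbl (T2 A) \<Longrightarrow> derivable cbl (Sq2 X (F2 A)) \<Longrightarrow> derivable cbl (Sq2 (F2 A) Y) \<Longrightarrow>
   derivable cbl (Sq2 X Y)"
  by simp

lemma cut_admissible_belowD:
  "cut_admissible_below cbl F \<Longrightarrow> fm_size G < fm_size F \<Longrightarrow> cut_admissible cbl G"
  by (simp add: cut_admissible_below_def)

definition derivable_by_left_intro :: "bool \<Rightarrow> seq \<Rightarrow> bool" where
  "derivable_by_left_intro cbl s \<longleftrightarrow> (\<exists>ps. left_intro cbl ps s \<and> (\<forall>p\<in>set ps. derivable cbl p))"

lemma cut_in_SMeet1:
  assumes "cut_admissible cbl (T1 A)" "derivable cbl (Sq1 X (F1 A))"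
    and "derivable cbl (Sq1 (SMeet1 (F1 A) Z) Y)"
  shows "derivable cbl (Sq1 (SMeet1 X Z) Y)"
proof -
  have "derivable cbl (Sq1 (F1 A) (SImp1 Z Y))"
    using assms(3) by (rule derivable_bl_step) (rule bl_rule.intros)
  with assms(1,2) have "derivable cbl (Sq1 X (SImp1 Z Y))" by (rule cut_admissibleD1)
  then show ?thesis by (rule derivable_bl_step) (rule bl_rule.intros)
qed

lemma cut_in_SMeet2:
  assumes "cut_admissible cbl (T2 A)" "derivable cbl (Sq2 X (F2 A))"
    and "derivable cbl (Sq2 (SMeet2 (F2 A) Z) Y)"
  shows "derivable cbl (Sq2 (SMeet2 X Z) Y)"
proof -
  have "derivable cbl (Sq2 (F2 A) (SImp2 Z Y))"
    using assms(3) by (rule derivable_bl_step) (rule bl_rule.intros)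
  with assms(1,2) have "derivable cbl (Sq2 X (SImp2 Z Y))" by (rule cut_admissibleD2)
  then show ?thesis by (rule derivable_bl_step) (rule bl_rule.intros)
qed

lemma cut_in_SJoin1:
  assumes "cut_admissible cbl (T1 A)" "derivable cbl (Sq1 (F1 A) Y)"
    and "derivable cbl (Sq1 X (SJoin1 Z (F1 A)))"
  shows "derivable cbl (Sq1 X (SJoin1 Z Y))"
proof -
  have "derivable cbl (Sq1 (SDif1 X Z) (F1 A))"
    using assms(3) by (rule derivable_bl_step) (rule bl_rule.intros)
  with assms(1) have "derivable cbl (Sq1 (SDif1 X Z) Y)" using assms(2) by (rule cut_admissibleD1)
  then show ?thesis by (rule derivable_bl_step) (rule bl_rule.intros)
qed

lemma cut_in_SJoin2:
  assumes "cut_admissible cbl (T2 A)" "derivable cbl (Sq2 (F2 A) Y)"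
    and "derivable cbl (Sq2 X (SJoin2 Z (F2 A)))"
  shows "derivable cbl (Sq2 X (SJoin2 Z Y))"
proof -
  have "derivable cbl (Sq2 (SDif2 X Z) (F2 A))"
    using assms(3) by (rule derivable_bl_step) (rule bl_rule.intros)
  with assms(1) have "derivable cbl (Sq2 (SDif2 X Z) Y)" using assms(2) by (rule cut_admissibleD2)
  then show ?thesis by (rule derivable_bl_step) (rule bl_rule.intros)
qed

lemma principal_cut1:
  assumes r: "right_intro cbl ps (Sq1 X (F1 A))" "\<forall>p\<in>set ps. derivable cbl p"
    and l: "derivable_by_left_intro cbl (Sq1 (F1 A) Y)"
    and below: "cut_admissible_below cbl (T1 A)"
  shows "derivable cbl (Sq1 X Y)"
proof -
  from l obtain qs where l: "left_intro cbl qs (Sq1 (F1 A) Y)" and lprem: "\<forall>q\<in>set qs. derivable cbl q"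
    unfolding derivable_by_left_intro_def by blast
  from r(1) show ?thesis
  proof (cases rule: right_intro.cases)
    case At1
    then show ?thesis using by_rule[OF left_intro_cf_rule[OF l] lprem] by simp
  next
    case One1
    from l One1 have "qs = [Sq1 I1 Y]" by (cases rule: left_intro.cases) simp_all
    with lprem One1 show ?thesis by simp
  next
    case Zero1
    from l Zero1 have "Y = O1" by (cases rule: left_intro.cases) simp_all
    with r(2) Zero1 show ?thesis by simp
  next
    case (Meet1 X1 A' X2 B')
    from l Meet1 have qs: "qs = [Sq1 (SMeet1 (F1 A') (F1 B')) Y]"
      by (cases rule: left_intro.cases) simp_all
    have cA: "cut_admissible cbl (T1 A')" and cB: "cut_admissible cbl (T1 B')"
      using below by (rule cut_admissible_belowD, simp add: Meet1)+
    have x: "derivable cbl (Sq1 X1 (F1 A'))" "derivable cbl (Sq1 X2 (F1 B'))"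
      using r(2) Meet1 by simp_all
    have "derivable cbl (Sq1 (SMeet1 (F1 A') (F1 B')) Y)" using lprem qs by simp
    with cA x(1) have "derivable cbl (Sq1 (SMeet1 X1 (F1 B')) Y)" by (rule cut_in_SMeet1)
    then have "derivable cbl (Sq1 (SMeet1 (F1 B') X1) Y)"
      by (rule derivable_bl_step) (rule bl_rule.intros)
    with cB x(2) have "derivable cbl (Sq1 (SMeet1 X2 X1) Y)" by (rule cut_in_SMeet1)
    then show ?thesis unfolding Meet1 by (rule derivable_bl_step) (rule bl_rule.intros)
  next
    case (Join1 A' B')
    from l Join1 obtain Y1 Y2 where Y: "Y = SJoin1 Y1 Y2"
      and qs: "qs = [Sq1 (F1 A') Y1, Sq1 (F1 B') Y2]"
      by (cases rule: left_intro.cases) simp_all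
    have cA: "cut_admissible cbl (T1 A')" and cB: "cut_admissible cbl (T1 B')"
      using below by (rule cut_admissible_belowD, simp add: Join1)+
    have y: "derivable cbl (Sq1 (F1 A') Y1)" "derivable cbl (Sq1 (F1 B') Y2)"
      using lprem qs by simp_all
    have "derivable cbl (Sq1 X (SJoin1 (F1 A') (F1 B')))" using r(2) Join1 by simp
    with cB y(2) have "derivable cbl (Sq1 X (SJoin1 (F1 A') Y2))" by (rule cut_in_SJoin1)
    then have "derivable cbl (Sq1 X (SJoin1 Y2 (F1 A')))"
      by (rule derivable_bl_step) (rule bl_rule.intros)
    with cA y(1) have "derivable cbl (Sq1 X (SJoin1 Y2 Y1))" by (rule cut_in_SJoin1)
    then show ?thesis unfolding Y by (rule derivable_bl_step) (rule bl_rule.intros)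
  next
    case (Pf A')
    from l Pf have "qs = [Sq1 (P (F2 A')) Y]" by (cases rule: left_intro.cases) simp_all
    with lprem have "derivable cbl (Sq1 (P (F2 A')) Y)" by simp
    then have y: "derivable cbl (Sq2 (F2 A') (N Y))" by (rule derivable_bl_step) (rule bl_rule.intros)
    from r(2) Pf have "derivable cbl (Sq1 X (P (F2 A')))" by simp
    then have x: "derivable cbl (Sq2 (N X) (F2 A'))" by (rule derivable_bl_step) (rule bl_rule.intros)
    have "cut_admissible cbl (T2 A')" using below by (rule cut_admissible_belowD) (simp add: Pf)
    from cut_admissibleD2[OF this x y] show ?thesis by (rule derivable_bl_step) (rule bl_rule.intros)
  next
    case (Neg1 A')
    from l Neg1 have "qs = [Sq1 (Star1 (F1 A')) Y]" by (cases rule: left_intro.cases) simp_all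
    with lprem have "derivable cbl (Sq1 (Star1 (F1 A')) Y)" by simp
    then have y: "derivable cbl (Sq1 (Star1 Y) (F1 A'))"
      using \<open>cbl\<close> by (rule derivable_cbl_step) (rule cbl_extra.intros)
    from r(2) Neg1 have "derivable cbl (Sq1 X (Star1 (F1 A')))" by simp
    then have x: "derivable cbl (Sq1 (F1 A') (Star1 X))"
      using \<open>cbl\<close> by (rule derivable_cbl_step) (rule cbl_extra.intros)
    have "cut_admissible cbl (T1 A')" using below by (rule cut_admissible_belowD) (simp add: Neg1)
    from cut_admissibleD1[OF this y x] show ?thesis
      using \<open>cbl\<close> by (rule derivable_cbl_step) (rule cbl_extra.intros)
  qed
qed

lemma principal_cut2:
  assumes r: "right_intro cbl ps (Sq2 X (F2 A))" "\<forall>p\<in>set ps. derivable cbl p"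
    and l: "derivable_by_left_intro cbl (Sq2 (F2 A) Y)"
    and below: "cut_admissible_below cbl (T2 A)"
  shows "derivable cbl (Sq2 X Y)"
proof -
  from l obtain qs where l: "left_intro cbl qs (Sq2 (F2 A) Y)" and lprem: "\<forall>q\<in>set qs. derivable cbl q"
    unfolding derivable_by_left_intro_def by blast
  from r(1) show ?thesis
  proof (cases rule: right_intro.cases)
    case At2
    then show ?thesis using by_rule[OF left_intro_cf_rule[OF l] lprem] by simp
  next
    case One2
    from l One2 have "qs = [Sq2 I2 Y]" by (cases rule: left_intro.cases) simp_all
    with lprem One2 show ?thesis by simp
  next
    case Zero2
    from l Zero2 have "Y = O2" by (cases rule: left_intro.cases) simp_all
    with r(2) Zero2 show ?thesis by simp
  next
    case (Meet2 X1 A' X2 B')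
    from l Meet2 have qs: "qs = [Sq2 (SMeet2 (F2 A') (F2 B')) Y]"
      by (cases rule: left_intro.cases) simp_all
    have cA: "cut_admissible cbl (T2 A')" and cB: "cut_admissible cbl (T2 B')"
      using below by (rule cut_admissible_belowD, simp add: Meet2)+
    have x: "derivable cbl (Sq2 X1 (F2 A'))" "derivable cbl (Sq2 X2 (F2 B'))"
      using r(2) Meet2 by simp_all
    have "derivable cbl (Sq2 (SMeet2 (F2 A') (F2 B')) Y)" using lprem qs by simp
    with cA x(1) have "derivable cbl (Sq2 (SMeet2 X1 (F2 B')) Y)" by (rule cut_in_SMeet2)
    then have "derivable cbl (Sq2 (SMeet2 (F2 B') X1) Y)"
      by (rule derivable_bl_step) (rule bl_rule.intros)
    with cB x(2) have "derivable cbl (Sq2 (SMeet2 X2 X1) Y)" by (rule cut_in_SMeet2)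
    then show ?thesis unfolding Meet2 by (rule derivable_bl_step) (rule bl_rule.intros)
  next
    case (Join2 A' B')
    from l Join2 obtain Y1 Y2 where Y: "Y = SJoin2 Y1 Y2"
      and qs: "qs = [Sq2 (F2 A') Y1, Sq2 (F2 B') Y2]"
      by (cases rule: left_intro.cases) simp_all
    have cA: "cut_admissible cbl (T2 A')" and cB: "cut_admissible cbl (T2 B')"
      using below by (rule cut_admissible_belowD, simp add: Join2)+
    have y: "derivable cbl (Sq2 (F2 A') Y1)" "derivable cbl (Sq2 (F2 B') Y2)"
      using lprem qs by simp_all
    have "derivable cbl (Sq2 X (SJoin2 (F2 A') (F2 B')))" using r(2) Join2 by simp
    with cB y(2) have "derivable cbl (Sq2 X (SJoin2 (F2 A') Y2))" by (rule cut_in_SJoin2)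
    then have "derivable cbl (Sq2 X (SJoin2 Y2 (F2 A')))"
      by (rule derivable_bl_step) (rule bl_rule.intros)
    with cA y(1) have "derivable cbl (Sq2 X (SJoin2 Y2 Y1))" by (rule cut_in_SJoin2)
    then show ?thesis unfolding Y by (rule derivable_bl_step) (rule bl_rule.intros)
  next
    case (Nf A')
    from l Nf have "qs = [Sq2 (N (F1 A')) Y]" by (cases rule: left_intro.cases) simp_all
    with lprem have "derivable cbl (Sq2 (N (F1 A')) Y)" by simp
    then have y: "derivable cbl (Sq1 (F1 A') (P Y))" by (rule derivable_bl_step) (rule bl_rule.intros)
    from r(2) Nf have "derivable cbl (Sq2 X (N (F1 A')))" by simp
    then have x: "derivable cbl (Sq1 (P X) (F1 A'))" by (rule derivable_bl_step) (rule bl_rule.intros)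
    have "cut_admissible cbl (T1 A')" using below by (rule cut_admissible_belowD) (simp add: Nf)
    from cut_admissibleD1[OF this x y] show ?thesis by (rule derivable_bl_step) (rule bl_rule.intros)
  next
    case (Neg2 A')
    from l Neg2 have "qs = [Sq2 (Star2 (F2 A')) Y]" by (cases rule: left_intro.cases) simp_all
    with lprem have "derivable cbl (Sq2 (Star2 (F2 A')) Y)" by simp
    then have y: "derivable cbl (Sq2 (Star2 Y) (F2 A'))"
      using \<open>cbl\<close> by (rule derivable_cbl_step) (rule cbl_extra.intros)
    from r(2) Neg2 have "derivable cbl (Sq2 X (Star2 (F2 A')))" by simp
    then have x: "derivable cbl (Sq2 (F2 A') (Star2 X))"
      using \<open>cbl\<close> by (rule derivable_cbl_step) (rule cbl_extra.intros)
    have "cut_admissible cbl (T2 A')" using below by (rule cut_admissible_belowD) (simp add: Neg2)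
    from cut_admissibleD2[OF this y x] show ?thesis
      using \<open>cbl\<close> by (rule derivable_cbl_step) (rule cbl_extra.intros)
  qed
qed

subsection \<open>Cut admissibility\<close>

lemma list_all2_Ball_right:
  "list_all2 R xs ys \<Longrightarrow> (\<And>x y. x \<in> set xs \<Longrightarrow> R x y \<Longrightarrow> Q y) \<Longrightarrow> \<forall>y\<in>set ys. Q y"
  by (metis in_set_conv_nth list_all2_conv_all_nth)

lemma derivable_repl_succedent:
  assumes "derivable cbl s" and "repl_seq False A1 A2 Y1 Y2 s s'"
    and Y1: "Y1 = F1 A1 \<or> derivable_by_left_intro cbl (Sq1 (F1 A1) Y1) \<and> cut_admissible_below cbl (T1 A1)"
    and Y2: "Y2 = F2 A2 \<or> derivable_by_left_intro cbl (Sq2 (F2 A2) Y2) \<and> cut_admissible_below cbl (T2 A2)"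
  shows "derivable cbl s'"
  using assms(1,2)
proof (induction arbitrary: s' rule: derivable.induct)
  case (by_rule ps s)
  from cf_rule_repl[OF by_rule(1,3)] obtain ps' where
    ps': "list_all2 (repl_seq False A1 A2 Y1 Y2) ps ps'" and image: "cf_rule cbl ps' s'
      \<or> (\<exists>X. s' = Sq1 X Y1 \<and> right_intro cbl ps' (Sq1 X (F1 A1)))
      \<or> (\<exists>X. s' = Sq2 X Y2 \<and> right_intro cbl ps' (Sq2 X (F2 A2)))"
    by auto
  from ps' have prems: "\<forall>p'\<in>set ps'. derivable cbl p'"
    by (rule list_all2_Ball_right) (use by_rule(2) in blast)
  from image show ?case
  proof (elim disjE exE conjE)
    assume "cf_rule cbl ps' s'"
    then show ?thesis using prems by (rule derivable.by_rule)
  next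
    fix X assume s': "s' = Sq1 X Y1" and r: "right_intro cbl ps' (Sq1 X (F1 A1))"
    from Y1 show ?thesis
    proof
      assume "Y1 = F1 A1"
      then show ?thesis using s' derivable.by_rule[OF right_intro_cf_rule[OF r] prems] by simp
    qed (use s' principal_cut1[OF r prems] in simp)
  next
    fix X assume s': "s' = Sq2 X Y2" and r: "right_intro cbl ps' (Sq2 X (F2 A2))"
    from Y2 show ?thesis
    proof
      assume "Y2 = F2 A2"
      then show ?thesis using s' derivable.by_rule[OF right_intro_cf_rule[OF r] prems] by simp
    qed (use s' principal_cut2[OF r prems] in simp)
  qed
qed

text \<open>When a replaced antecedent occurrence turns out to be principal, the derivation of
  \<open>X1 \<turnstile> A1\<close> is traversed in turn, now replacing succedent occurrences of \<open>A1\<close>.\<close>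

lemma derivable_repl_antecedent:
  assumes "derivable cbl s" and "repl_seq True A1 A2 X1 X2 s s'"
    and X1: "X1 = F1 A1 \<or> derivable cbl (Sq1 X1 (F1 A1)) \<and> cut_admissible_below cbl (T1 A1)"
    and X2: "X2 = F2 A2 \<or> derivable cbl (Sq2 X2 (F2 A2)) \<and> cut_admissible_below cbl (T2 A2)"
  shows "derivable cbl s'"
  using assms(1,2)
proof (induction arbitrary: s' rule: derivable.induct)
  case (by_rule ps s)
  from cf_rule_repl[OF by_rule(1,3)] obtain ps' where
    ps': "list_all2 (repl_seq True A1 A2 X1 X2) ps ps'" and image: "cf_rule cbl ps' s'
      \<or> (\<exists>Y. s' = Sq1 X1 Y \<and> left_intro cbl ps' (Sq1 (F1 A1) Y))
      \<or> (\<exists>Y. s' = Sq2 X2 Y \<and> left_intro cbl ps' (Sq2 (F2 A2) Y))"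
    by auto
  from ps' have prems: "\<forall>p'\<in>set ps'. derivable cbl p'"
    by (rule list_all2_Ball_right) (use by_rule(2) in blast)
  from image show ?case
  proof (elim disjE exE conjE)
    assume "cf_rule cbl ps' s'"
    then show ?thesis using prems by (rule derivable.by_rule)
  next
    fix Y assume s': "s' = Sq1 X1 Y" and l: "left_intro cbl ps' (Sq1 (F1 A1) Y)"
    from X1 show ?thesis
    proof
      assume "X1 = F1 A1"
      then show ?thesis using s' derivable.by_rule[OF left_intro_cf_rule[OF l] prems] by simp
    next
      assume x: "derivable cbl (Sq1 X1 (F1 A1)) \<and> cut_admissible_below cbl (T1 A1)"
      have repl: "repl_seq False A1 A2 Y (F2 A2) (Sq1 X1 (F1 A1)) s'"
        using s' by (simp add: repl_simps repl_refl)
      have "derivable_by_left_intro cbl (Sq1 (F1 A1) Y)"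
        using l prems by (auto simp: derivable_by_left_intro_def)
      with x show ?thesis by (intro derivable_repl_succedent[OF conjunct1[OF x] repl]) simp_all
    qed
  next
    fix Y assume s': "s' = Sq2 X2 Y" and l: "left_intro cbl ps' (Sq2 (F2 A2) Y)"
    from X2 show ?thesis
    proof
      assume "X2 = F2 A2"
      then show ?thesis using s' derivable.by_rule[OF left_intro_cf_rule[OF l] prems] by simp
    next
      assume x: "derivable cbl (Sq2 X2 (F2 A2)) \<and> cut_admissible_below cbl (T2 A2)"
      have repl: "repl_seq False A1 A2 (F1 A1) Y (Sq2 X2 (F2 A2)) s'"
        using s' by (simp add: repl_simps repl_refl)
      have "derivable_by_left_intro cbl (Sq2 (F2 A2) Y)"
        using l prems by (auto simp: derivable_by_left_intro_def)
      with x show ?thesis by (intro derivable_repl_succedent[OF conjunct1[OF x] repl]) simp_all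
    qed
  qed
qed

text \<open>To cut \<open>X \<turnstile> A\<close> against \<open>A \<turnstile> Y\<close>, replace \<open>A\<close> by \<open>X\<close> in antecedent position;
  the replacement in the other type is the identity.\<close>

theorem cut_admissible_all: "cut_admissible cbl F"
proof (induction F rule: measure_induct_rule[of fm_size])
  case (less F)
  then have below: "cut_admissible_below cbl F" by (simp add: cut_admissible_below_def)
  show ?case
  proof (cases F)
    case (T1 A)
    have "derivable cbl (Sq1 X Y)"
      if "derivable cbl (Sq1 X (F1 A))" "derivable cbl (Sq1 (F1 A) Y)" for X Y
      using that(2)
      by (rule derivable_repl_antecedent[of cbl _ A Zero2 X "F2 Zero2"])
        (use that(1) below T1 in \<open>simp_all add: repl_simps repl_refl\<close>)
    with T1 show ?thesis by simp
  next
    case (T2 A)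
    have "derivable cbl (Sq2 X Y)"
      if "derivable cbl (Sq2 X (F2 A))" "derivable cbl (Sq2 (F2 A) Y)" for X Y
      using that(2)
      by (rule derivable_repl_antecedent[of cbl _ Zero1 A "F1 Zero1" X])
        (use that(1) below T2 in \<open>simp_all add: repl_simps repl_refl\<close>)
    with T2 show ?thesis by simp
  qed
qed

subsection \<open>Derivation trees and the subformula property\<close>

lemma derivable_if_valid_with_cut:
  "valid (\<lambda>ps s. cf_rule cbl ps s \<or> cut_rule ps s) T \<Longrightarrow> derivable cbl (root T)"
proof (induction T)
  case (Nd s ts)
  then have prems: "\<forall>p\<in>set (map root ts). derivable cbl p"
    and rule: "cf_rule cbl (map root ts) s \<or> cut_rule (map root ts) s"
    by auto
  from rule show ?case
  proof
    assume "cut_rule (map root ts) s"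
    then show ?thesis
      using prems cut_admissibleD1[OF cut_admissible_all] cut_admissibleD2[OF cut_admissible_all]
      by (cases rule: cut_rule.cases) auto
  qed (use prems derivable.by_rule in auto)
qed

lemma derivable_imp_valid_tree:
  assumes "derivable cbl s" and "Q s"
    and Q_prems: "\<And>ps s. cf_rule cbl ps s \<Longrightarrow> Q s \<Longrightarrow> \<forall>p\<in>set ps. Q p"
  shows "\<exists>T. valid (cf_rule cbl) T \<and> root T = s \<and> (\<forall>s'\<in>seqs T. Q s')"
  using assms(1,2)
proof (induction rule: derivable.induct)
  case (by_rule ps s)
  then have "\<forall>p\<in>set ps. \<exists>T. valid (cf_rule cbl) T \<and> root T = p \<and> (\<forall>s'\<in>seqs T. Q s')"
    using Q_prems by blast
  then obtain tree where tree: "\<And>p. p \<in> set ps \<Longrightarrow>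
      valid (cf_rule cbl) (tree p) \<and> root (tree p) = p \<and> (\<forall>s'\<in>seqs (tree p). Q s')"
    by metis
  then have "map root (map tree ps) = ps" by (simp add: map_idI)
  with by_rule tree show ?case by (intro exI[of _ "Nd s (map tree ps)"]) auto
qed

lemma bl_rule_premises_bl_seq: "bl_rule ps s \<Longrightarrow> bl_seq s \<Longrightarrow> \<forall>p\<in>set ps. bl_seq p"
  by (induction rule: bl_rule.cases) auto

definition subfms_seq :: "seq \<Rightarrow> fm set" where
  "subfms_seq s = (\<Union>A\<in>fmls_seq s. subfm A)"

lemma subfm_refl: "A \<in> subfm A"
proof (cases A)
  case (T1 B)
  then show ?thesis by (cases B) simp_all
next
  case (T2 B)
  then show ?thesis by (cases B) simp_all
qed

lemma cf_rule_premise_subfms: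
  "cf_rule cbl ps s \<Longrightarrow> p \<in> set ps \<Longrightarrow> subfms_seq p \<subseteq> subfms_seq s"
  unfolding cf_rule_def subfms_seq_def
  by (auto elim!: bl_rule.cases cbl_extra.cases) blast+

lemma valid_cf_rule_fmls_tree:
  "valid (cf_rule cbl) T \<Longrightarrow> fmls_tree T \<subseteq> subfms_seq (root T)"
proof (induction T)
  case (Nd s ts)
  have "fmls_tree t \<subseteq> subfms_seq s" if "t \<in> set ts" for t
  proof -
    have "fmls_tree t \<subseteq> subfms_seq (root t)" using Nd that by simp
    also have "\<dots> \<subseteq> subfms_seq s"
      using Nd.prems that by (intro cf_rule_premise_subfms[of cbl "map root ts"]) auto
    finally show ?thesis .
  qed
  moreover have "fmls_seq s \<subseteq> subfms_seq s" by (auto simp: subfms_seq_def intro: subfm_refl)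
  ultimately show ?case by (auto simp: fmls_tree_def)
qed

theorem mainTheorem4:
  shows "(\<forall>T. DBL_deriv T \<longrightarrow> (\<exists>T'. DBL_cutfree T' \<and> root T' = root T))
       \<and> (\<forall>T. DCBL_deriv T \<longrightarrow> (\<exists>T'. DCBL_cutfree T' \<and> root T' = root T))
       \<and> (\<forall>T. DBL_cutfree T \<longrightarrow>
            fmls_tree T \<subseteq> (\<Union>A\<in>fmls_seq (root T). subfm A))
       \<and> (\<forall>T. DCBL_cutfree T \<longrightarrow>
            fmls_tree T \<subseteq> (\<Union>A\<in>fmls_seq (root T). subfm A))"
proof (intro conjI allI impI)
  fix T assume T: "DBL_deriv T"
  then have "derivable False (root T)"
    by (intro derivable_if_valid_with_cut) (simp add: DBL_deriv_def cf_rule_False)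
  moreover have "bl_seq (root T)" using T by (cases T) (simp add: DBL_deriv_def)
  ultimately have "\<exists>T'. valid (cf_rule False) T' \<and> root T' = root T \<and> (\<forall>s\<in>seqs T'. bl_seq s)"
    by (rule derivable_imp_valid_tree) (simp add: cf_rule_False bl_rule_premises_bl_seq)
  then show "\<exists>T'. DBL_cutfree T' \<and> root T' = root T" by (auto simp: DBL_cutfree_def cf_rule_False)
next
  fix T assume "DCBL_deriv T"
  then have "derivable True (root T)"
    by (intro derivable_if_valid_with_cut) (simp add: DCBL_deriv_def cf_rule_True)
  then show "\<exists>T'. DCBL_cutfree T' \<and> root T' = root T"
    using derivable_imp_valid_tree[of True _ "\<lambda>_. True"] by (auto simp: DCBL_cutfree_def cf_rule_True)
next
  fix T assume "DBL_cutfree T"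
  then show "fmls_tree T \<subseteq> (\<Union>A\<in>fmls_seq (root T). subfm A)"
    using valid_cf_rule_fmls_tree[of False] by (simp add: DBL_cutfree_def cf_rule_False subfms_seq_def)
next
  fix T assume "DCBL_cutfree T"
  then show "fmls_tree T \<subseteq> (\<Union>A\<in>fmls_seq (root T). subfm A)"
    using valid_cf_rule_fmls_tree[of True] by (simp add: DCBL_cutfree_def cf_rule_True subfms_seq_def)
qed

end
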